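(* Let $I\in\{0,1\}^{n\times m}$, $i\in X$, $j\in Y$. Then $\mathcal{E}(I)_{ij}=1$ if and only if all of the following hold: (a) $I_{ij}=1$; (b) for every $i'\in X$ with $\{i'\}^\uparrow\subsetneq\{i\}^\uparrow$ we have $I_{i'j}=0$; (c) for every $j'\in Y$ with $\{j'\}^\downarrow\subsetneq\{j\}^\downarrow$ we have $I_{ij'}=0$.
   Context: $X=\{1,\dots,n\}$, $Y=\{1,\dots,m\}$. For $C\subseteq X$, $D\subseteq Y$: $C^{\uparrow}=\{j\in Y\mid \forall i\in C: I_{ij}=1\}$, $D^{\downarrow}=\{i\in X\mid \forall j\in D: I_{ij}=1\}$ (so $\{i\}^\uparrow$ is the set of columns with a 1 in row $i$, $\{j\}^\downarrow$ the set of rows with a 1 in column $j$). $\mathcal{B}(I)=\{\langle C,D\rangle\mid C^\uparrow=D, D^\downarrow=C\}$ ordered by $\langle C_1,D_1\rangle\leq\langle C_2,D_2\rangle$ iff $C_1\subseteq C_2$; $\gamma(i)=\langle\{i\}^{\uparrow\downarrow},\{i\}^\uparrow\rangle$, $\mu(j)=\langle\{j\}^\downarrow,\{j\}^{\downarrow\uparrow}\rangle$, $\mathcal{I}_{ij}=\{c\in\mathcal{B}(I)\mid\gamma(i)\leq c\leq\mu(j)\}$. $\mathcal{E}(I)\in\{0,1\}^{n\times m}$: $\mathcal{E}(I)_{ij}=1$ iff $\mathcal{I}_{ij}$ is non-empty and minimal w.r.t. $\subseteq$ among the non-empty sets $\mathcal{I}_{i'j'}$. *)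

theory Defs
  imports Main
begin

text \<open>A Boolean matrix I in {0,1}^(n x m) is modelled as a predicate
  I :: nat => nat => bool on rows X = {1..n} and columns Y = {1..m};
  I i j holds iff I_ij = 1.  Values outside X x Y are irrelevant.\<close>

definition up :: "nat \<Rightarrow> (nat \<Rightarrow> nat \<Rightarrow> bool) \<Rightarrow> nat set \<Rightarrow> nat set" where
  "up m I C = {j \<in> {1..m}. \<forall>i\<in>C. I i j}"

definition down :: "nat \<Rightarrow> (nat \<Rightarrow> nat \<Rightarrow> bool) \<Rightarrow> nat set \<Rightarrow> nat set" where
  "down n I D = {i \<in> {1..n}. \<forall>j\<in>D. I i j}"

definition concepts :: "nat \<Rightarrow> nat \<Rightarrow> (nat \<Rightarrow> nat \<Rightarrow> bool) \<Rightarrow> (nat set \<times> nat set) set" where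
  "concepts n m I = {(C, D). C \<subseteq> {1..n} \<and> D \<subseteq> {1..m} \<and> up m I C = D \<and> down n I D = C}"

definition concept_le :: "nat set \<times> nat set \<Rightarrow> nat set \<times> nat set \<Rightarrow> bool" where
  "concept_le c1 c2 \<longleftrightarrow> fst c1 \<subseteq> fst c2"

definition gamma :: "nat \<Rightarrow> nat \<Rightarrow> (nat \<Rightarrow> nat \<Rightarrow> bool) \<Rightarrow> nat \<Rightarrow> nat set \<times> nat set" where
  "gamma n m I i = (down n I (up m I {i}), up m I {i})"

definition mu :: "nat \<Rightarrow> nat \<Rightarrow> (nat \<Rightarrow> nat \<Rightarrow> bool) \<Rightarrow> nat \<Rightarrow> nat set \<times> nat set" where
  "mu n m I j = (down n I {j}, up m I (down n I {j}))"

definition interval :: "nat \<Rightarrow> nat \<Rightarrow> (nat \<Rightarrow> nat \<Rightarrow> bool) \<Rightarrow> nat \<Rightarrow> nat \<Rightarrow> (nat set \<times> nat set) set" where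
  "interval n m I i j = {c \<in> concepts n m I. concept_le (gamma n m I i) c \<and> concept_le c (mu n m I j)}"

definition E :: "nat \<Rightarrow> nat \<Rightarrow> (nat \<Rightarrow> nat \<Rightarrow> bool) \<Rightarrow> nat \<Rightarrow> nat \<Rightarrow> bool" where
  "E n m I i j \<longleftrightarrow> i \<in> {1..n} \<and> j \<in> {1..m} \<and> interval n m I i j \<noteq> {} \<and>
     (\<forall>i'\<in>{1..n}. \<forall>j'\<in>{1..m}. interval n m I i' j' \<noteq> {} \<longrightarrow>
        \<not> (interval n m I i' j' \<subset> interval n m I i j))"

end

theory Submission
  imports Defs
begin

text \<open>For a concept \<open>(C, D)\<close>, membership of an object in the extent and of an attribute in the
  intent are both inclusions: \<open>i \<in> C \<longleftrightarrow> D \<subseteq> {i}\<^sup>\<up>\<close> and \<open>j \<in> D \<longleftrightarrow> C \<subseteq> {j}\<^sup>\<down>\<close>.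
  Hence the interval \<open>\<I>\<^sub>i\<^sub>j\<close> consists of the concepts whose intent lies in \<open>{i}\<^sup>\<up>\<close> and whose
  extent lies in \<open>{j}\<^sup>\<down>\<close>. When \<open>I\<^sub>i\<^sub>j = 1\<close>, both \<open>\<gamma>(i)\<close> and \<open>\<mu>(j)\<close> belong to \<open>\<I>\<^sub>i\<^sub>j\<close>.
  Comparing these witnesses shows that a nonempty \<open>\<I>\<^sub>i\<^sub>'\<^sub>j\<^sub>'\<close> lies inside \<open>\<I>\<^sub>i\<^sub>j\<close> exactly when
  \<open>{i'}\<^sup>\<up> \<subseteq> {i}\<^sup>\<up>\<close> and \<open>{j'}\<^sup>\<down> \<subseteq> {j}\<^sup>\<down>\<close>, so minimality of \<open>\<I>\<^sub>i\<^sub>j\<close> only has to be tested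
  against moving one of the two indices.\<close>

lemma concept_extent_mem_iff:
  assumes "(C, D) \<in> concepts n m I" and "i \<in> {1..n}"
  shows "i \<in> C \<longleftrightarrow> D \<subseteq> up m I {i}"
  using assms by (auto simp: concepts_def up_def down_def)

lemma concept_intent_mem_iff:
  assumes "(C, D) \<in> concepts n m I" and "j \<in> {1..m}"
  shows "j \<in> D \<longleftrightarrow> C \<subseteq> down n I {j}"
  using assms by (auto simp: concepts_def up_def down_def)

lemma interval_eq:
  assumes "i \<in> {1..n}" and "j \<in> {1..m}"
  shows "interval n m I i j =
    {c \<in> concepts n m I. snd c \<subseteq> up m I {i} \<and> fst c \<subseteq> down n I {j}}"
proof -
  have "concept_le (gamma n m I i) (C, D) \<longleftrightarrow> D \<subseteq> up m I {i}"
    and "concept_le (C, D) (mu n m I j) \<longleftrightarrow> C \<subseteq> down n I {j}"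
    if "(C, D) \<in> concepts n m I" for C D
    using that assms concept_extent_mem_iff[OF that, of i]
    by (auto simp: concept_le_def gamma_def mu_def concepts_def up_def down_def)
  then show ?thesis
    by (auto simp: interval_def)
qed

lemma gamma_mem_interval:
  assumes "i \<in> {1..n}" and "j \<in> {1..m}" and "I i j"
  shows "gamma n m I i \<in> interval n m I i j"
  using assms by (auto simp: interval_eq gamma_def concepts_def up_def down_def)

lemma mu_mem_interval:
  assumes "i \<in> {1..n}" and "j \<in> {1..m}" and "I i j"
  shows "mu n m I j \<in> interval n m I i j"
  using assms by (auto simp: interval_eq mu_def concepts_def up_def down_def)

lemma interval_nonempty_iff:
  assumes "i \<in> {1..n}" and "j \<in> {1..m}"
  shows "interval n m I i j \<noteq> {} \<longleftrightarrow> I i j"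
proof
  assume "interval n m I i j \<noteq> {}"
  then obtain C D where "(C, D) \<in> concepts n m I" "i \<in> C" "j \<in> D"
    using assms by (auto simp: interval_eq concept_extent_mem_iff concept_intent_mem_iff)
  then show "I i j"
    by (auto simp: concepts_def up_def)
qed (use gamma_mem_interval[where I = I, OF assms] in blast)

lemma interval_subset_iff:
  assumes "i \<in> {1..n}" and "j \<in> {1..m}" and "i' \<in> {1..n}" and "j' \<in> {1..m}" and "I i' j'"
  shows "interval n m I i' j' \<subseteq> interval n m I i j \<longleftrightarrow>
    up m I {i'} \<subseteq> up m I {i} \<and> down n I {j'} \<subseteq> down n I {j}"
proof
  assume sub: "interval n m I i' j' \<subseteq> interval n m I i j"
  have "gamma n m I i' \<in> interval n m I i j" "mu n m I j' \<in> interval n m I i j"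
    using sub gamma_mem_interval[where I = I, OF assms(3-5)] mu_mem_interval[where I = I, OF assms(3-5)]
    by auto
  then show "up m I {i'} \<subseteq> up m I {i} \<and> down n I {j'} \<subseteq> down n I {j}"
    using assms(1,2) by (simp add: interval_eq gamma_def mu_def)
qed (use assms in \<open>auto simp: interval_eq\<close>)

lemma interval_psubset_iff:
  assumes "i \<in> {1..n}" and "j \<in> {1..m}" and "i' \<in> {1..n}" and "j' \<in> {1..m}"
    and "I i j" and "I i' j'"
  shows "interval n m I i' j' \<subset> interval n m I i j \<longleftrightarrow>
    up m I {i'} \<subseteq> up m I {i} \<and> down n I {j'} \<subseteq> down n I {j} \<and>
    (up m I {i'} \<subset> up m I {i} \<or> down n I {j'} \<subset> down n I {j})"
  using interval_subset_iff[where I = I, OF assms(1-4,6)] interval_subset_iff[where I = I, OF assms(3,4,1,2,5)]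
  by blast

lemma no_smaller_incidence_iff:
  assumes "i \<in> {1..n}" and "j \<in> {1..m}" and "I i j"
  shows "(\<forall>i'\<in>{1..n}. \<forall>j'\<in>{1..m}. I i' j' \<longrightarrow>
        \<not> (up m I {i'} \<subseteq> up m I {i} \<and> down n I {j'} \<subseteq> down n I {j} \<and>
           (up m I {i'} \<subset> up m I {i} \<or> down n I {j'} \<subset> down n I {j}))) \<longleftrightarrow>
      (\<forall>i'\<in>{1..n}. up m I {i'} \<subset> up m I {i} \<longrightarrow> \<not> I i' j)
      \<and> (\<forall>j'\<in>{1..m}. down n I {j'} \<subset> down n I {j} \<longrightarrow> \<not> I i j')"
    (is "?minimal \<longleftrightarrow> ?rows \<and> ?cols")
proof
  assume ?minimal
  then show "?rows \<and> ?cols"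
    using assms by blast
next
  assume "?rows \<and> ?cols"
  then have rows: ?rows and cols: ?cols
    by blast+
  show ?minimal
  proof (intro ballI impI notI)
    fix i' j'
    assume i': "i' \<in> {1..n}" and j': "j' \<in> {1..m}" and "I i' j'"
      and le: "up m I {i'} \<subseteq> up m I {i} \<and> down n I {j'} \<subseteq> down n I {j} \<and>
        (up m I {i'} \<subset> up m I {i} \<or> down n I {j'} \<subset> down n I {j})"
    have "I i' j" and "I i j'"
      using le i' j' \<open>I i' j'\<close> by (auto simp: up_def down_def)
    then show False
      using le rows cols i' j' by blast
  qed
qed

theorem lemma2:
  fixes n m :: nat and I :: "nat \<Rightarrow> nat \<Rightarrow> bool" and i j :: nat
  assumes "i \<in> {1..n}" and "j \<in> {1..m}"
  shows "E n m I i j \<longleftrightarrow>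
           I i j
         \<and> (\<forall>i'\<in>{1..n}. up m I {i'} \<subset> up m I {i} \<longrightarrow> \<not> I i' j)
         \<and> (\<forall>j'\<in>{1..m}. down n I {j'} \<subset> down n I {j} \<longrightarrow> \<not> I i j')"
proof -
  have "E n m I i j \<longleftrightarrow> I i j \<and> (\<forall>i'\<in>{1..n}. \<forall>j'\<in>{1..m}. I i' j' \<longrightarrow>
      \<not> interval n m I i' j' \<subset> interval n m I i j)"
    using assms by (simp add: E_def interval_nonempty_iff cong: conj_cong)
  also have "\<dots> \<longleftrightarrow> I i j \<and> (\<forall>i'\<in>{1..n}. \<forall>j'\<in>{1..m}. I i' j' \<longrightarrow>
      \<not> (up m I {i'} \<subseteq> up m I {i} \<and> down n I {j'} \<subseteq> down n I {j} \<and>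
         (up m I {i'} \<subset> up m I {i} \<or> down n I {j'} \<subset> down n I {j})))"
    using assms by (intro conj_cong refl ball_cong imp_cong) (simp_all add: interval_psubset_iff)
  also have "\<dots> \<longleftrightarrow> I i j
         \<and> (\<forall>i'\<in>{1..n}. up m I {i'} \<subset> up m I {i} \<longrightarrow> \<not> I i' j)
         \<and> (\<forall>j'\<in>{1..m}. down n I {j'} \<subset> down n I {j} \<longrightarrow> \<not> I i j')"
    by (rule conj_cong[OF refl no_smaller_incidence_iff[OF assms]])
  finally show ?thesis .
qed

end
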